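(* Let $\hat\theta$ be the maximum likelihood estimate of an ordered real sample $x_1 < x_2 < \dots < x_n$ from the Cauchy distribution, and let $F(x;\theta) = \int_{-\infty}^x f(y;\theta)\,dy$ be the Cauchy distribution function. Then: (i) if $n = 3$, $F(x_3;\hat\theta) + F(x_1;\hat\theta) = 2F(x_2;\hat\theta)$; (ii) if $n = 4$, $F(x_3;\hat\theta) - F(x_1;\hat\theta) = F(x_4;\hat\theta) - F(x_2;\hat\theta) = 1/2$.
   Context: $\mathbb{H} = \{\theta\in\mathbb{C}:\Im\theta>0\}$. For $\theta = \mu+i\sigma\in\mathbb{H}$, $f(x;\theta) = \frac{\sigma}{\pi}\frac{1}{(x-\mu)^2+\sigma^2}$ is the Cauchy density. The maximum likelihood estimate $\hat\theta$ is the unique maximizer over $\mathbb{H}$ of $\prod_{j=1}^n f(x_j;\theta)$. *)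

theory Defs
  imports "HOL-Analysis.Analysis"
begin

definition upper_half :: "complex set" where
  "upper_half = {\<theta>. Im \<theta> > 0}"

definition cauchy_density :: "real \<Rightarrow> complex \<Rightarrow> real" where
  "cauchy_density x \<theta> = Im \<theta> / pi * (1 / ((x - Re \<theta>)^2 + (Im \<theta>)^2))"

definition cauchy_cdf :: "real \<Rightarrow> complex \<Rightarrow> real" where
  "cauchy_cdf x \<theta> = integral {..x} (\<lambda>y. cauchy_density y \<theta>)"

definition cauchy_likelihood :: "nat \<Rightarrow> (nat \<Rightarrow> real) \<Rightarrow> complex \<Rightarrow> real" where
  "cauchy_likelihood n x \<theta> = (\<Prod>j = 1..n. cauchy_density (x j) \<theta>)"

definition is_cauchy_mle :: "nat \<Rightarrow> (nat \<Rightarrow> real) \<Rightarrow> complex \<Rightarrow> bool" where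
  "is_cauchy_mle n x \<theta> \<longleftrightarrow> \<theta> \<in> upper_half \<and>
     (\<forall>\<theta>'\<in>upper_half. cauchy_likelihood n x \<theta>' \<le> cauchy_likelihood n x \<theta>) \<and>
     (\<forall>\<theta>'\<in>upper_half. cauchy_likelihood n x \<theta>' = cauchy_likelihood n x \<theta> \<longrightarrow> \<theta>' = \<theta>)"

end

theory Submission
  imports Defs "HOL-Real_Asymp.Real_Asymp"
begin

(*
  Write F(y; theta) = 1/2 + phi(y) / (2 pi) with phi(y) = 2 arctan ((y - mu) / sigma) in (-pi, pi),
  so that cis (phi y) = (sigma + i (y - mu))^2 / ((y - mu)^2 + sigma^2).  The two score equations
  of the log-likelihood (in mu and in sigma) say precisely that the unit vectors cis (phi x_j)
  sum to zero.  Three unit vectors with zero sum form an equilateral triangle, and four form two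
  antipodal pairs; since phi is increasing and its values lie within one turn, this pins down
  the gaps phi x_(j+1) - phi x_j, which translate into (i) and (ii).
*)
lemma has_integral_atMost_FTC_nonneg:
  fixes f F :: "real \<Rightarrow> real"
  assumes deriv: "\<And>y. (F has_real_derivative f y) (at y)"
    and cont: "\<And>y. isCont f y"
    and nonneg: "\<And>y. 0 \<le> f y"
    and lim: "(F \<longlongrightarrow> L) at_bot"
  shows "(f has_integral F b - L) {..b}"
proof -
  have "((F \<circ> real_of_ereal) \<longlongrightarrow> F b) (at_left (ereal b))"
    unfolding ereal_tendsto_simps1
    using DERIV_isCont[OF deriv] by (simp add: isCont_def filterlim_at_split)
  moreover have "((F \<circ> real_of_ereal) \<longlongrightarrow> L) (at_right (-\<infinity>))"
    unfolding ereal_tendsto_simps1 by (rule lim)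
  ultimately have "set_integrable lborel (einterval (-\<infinity>) (ereal b)) f"
      "(LBINT y=-\<infinity>..ereal b. f y) = F b - L"
    using interval_integral_FTC_nonneg[of "-\<infinity>" "ereal b" F f L "F b"] deriv cont nonneg
    by auto
  then have int: "set_integrable lborel {..<b} f"
      and val: "(LINT y:{..<b}|lborel. f y) = F b - L"
    by (simp_all add: interval_lebesgue_integral_le_eq)
  have "(f has_integral F b - L) {..<b}"
    using set_borel_integral_eq_integral[OF int] val by (metis has_integral_integral)
  then show ?thesis
    by (rule has_integral_spike_set_eq[THEN iffD1, rotated -1])
       (auto intro: negligible_subset[of "{b}"])
qed

definition cauchy_angle :: "real \<Rightarrow> complex \<Rightarrow> real" where
  "cauchy_angle y \<theta> = 2 * arctan ((y - Re \<theta>) / Im \<theta>)"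

lemma cauchy_cdf_eq_angle:
  assumes "Im \<theta> > 0"
  shows "cauchy_cdf y \<theta> = 1/2 + cauchy_angle y \<theta> / (2 * pi)"
proof -
  define m s where "m = Re \<theta>" and "s = Im \<theta>"
  have "s > 0" using assms by (simp add: s_def)
  define F where "F z = arctan ((z - m) / s) / pi" for z
  have "((\<lambda>z. cauchy_density z \<theta>) has_integral F y - (-1/2)) {..y}"
  proof (rule has_integral_atMost_FTC_nonneg)
    show "(F has_real_derivative cauchy_density z \<theta>) (at z)" for z
    proof -
      have "(F has_real_derivative inverse (1 + ((z - m) / s)\<^sup>2) * (1 / s) / pi) (at z)"
        unfolding F_def using \<open>s > 0\<close> by (auto intro!: derivative_eq_intros)
      moreover have "inverse (1 + ((z - m) / s)\<^sup>2) * (1 / s) / pi = cauchy_density z \<theta>"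
        using \<open>s > 0\<close>
        by (simp add: cauchy_density_def m_def s_def field_simps power2_eq_square)
      ultimately show ?thesis by simp
    qed
    show "isCont (\<lambda>z. cauchy_density z \<theta>) z" for z
      unfolding cauchy_density_def using \<open>s > 0\<close> s_def
      by (intro continuous_intros) (auto simp: add_nonneg_pos)
    show "0 \<le> cauchy_density z \<theta>" for z
      using assms by (simp add: cauchy_density_def)
    show "(F \<longlongrightarrow> -1/2) at_bot"
      unfolding F_def using \<open>s > 0\<close> by real_asymp
  qed
  then show ?thesis
    by (simp add: cauchy_cdf_def cauchy_angle_def F_def m_def s_def integral_unique)
qed

lemma cauchy_cdf_diff:
  assumes "Im \<theta> > 0"
  shows "cauchy_cdf z \<theta> - cauchy_cdf y \<theta> = (cauchy_angle z \<theta> - cauchy_angle y \<theta>) / (2 * pi)"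
  using assms by (simp add: cauchy_cdf_eq_angle diff_divide_distrib)

lemma cauchy_angle_bounds: "-pi < cauchy_angle y \<theta>" "cauchy_angle y \<theta> < pi"
  using arctan_bounded[of "(y - Re \<theta>) / Im \<theta>"] by (simp_all add: cauchy_angle_def)

lemma cauchy_angle_strict_mono:
  assumes "Im \<theta> > 0" "y < z"
  shows "cauchy_angle y \<theta> < cauchy_angle z \<theta>"
  using assms by (simp add: cauchy_angle_def arctan_less_iff divide_strict_right_mono)

lemma cauchy_density_pos: "Im \<theta> > 0 \<Longrightarrow> cauchy_density y \<theta> > 0"
  by (simp add: cauchy_density_def add_nonneg_pos)

lemma cauchy_mle_Im_pos: "is_cauchy_mle n x \<theta> \<Longrightarrow> Im \<theta> > 0"
  by (simp add: is_cauchy_mle_def upper_half_def)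

definition cauchy_log_likelihood :: "nat \<Rightarrow> (nat \<Rightarrow> real) \<Rightarrow> real \<Rightarrow> real \<Rightarrow> real" where
  "cauchy_log_likelihood n x m s = (\<Sum>j=1..n. ln s - ln pi - ln ((x j - m)\<^sup>2 + s\<^sup>2))"

lemma ln_cauchy_likelihood:
  assumes "s > 0"
  shows "ln (cauchy_likelihood n x (Complex m s)) = cauchy_log_likelihood n x m s"
proof -
  have pos: "cauchy_density (x j) (Complex m s) > 0" for j
    using assms by (simp add: cauchy_density_pos)
  have "ln (cauchy_likelihood n x (Complex m s)) =
      (\<Sum>j=1..n. ln (cauchy_density (x j) (Complex m s)))"
    unfolding cauchy_likelihood_def using pos
    by (subst ln_prod) (auto simp: less_imp_neq[symmetric])
  also have "\<dots> = cauchy_log_likelihood n x m s"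
    unfolding cauchy_log_likelihood_def cauchy_density_def using assms
    by (intro sum.cong) (simp_all add: ln_div ln_mult add_nonneg_pos)
  finally show ?thesis .
qed

lemma cauchy_log_likelihood_le_mle:
  assumes mle: "is_cauchy_mle n x \<theta>" and "s > 0"
  shows "cauchy_log_likelihood n x m s \<le> cauchy_log_likelihood n x (Re \<theta>) (Im \<theta>)"
proof -
  have "Im \<theta> > 0" using mle by (rule cauchy_mle_Im_pos)
  have "0 < cauchy_likelihood n x (Complex m s)"
    unfolding cauchy_likelihood_def using \<open>s > 0\<close> by (intro prod_pos) (simp add: cauchy_density_pos)
  moreover have "cauchy_likelihood n x (Complex m s) \<le> cauchy_likelihood n x (Complex (Re \<theta>) (Im \<theta>))"
    using mle \<open>s > 0\<close> by (simp add: is_cauchy_mle_def upper_half_def)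
  ultimately have "ln (cauchy_likelihood n x (Complex m s)) \<le>
      ln (cauchy_likelihood n x (Complex (Re \<theta>) (Im \<theta>)))"
    by simp
  then show ?thesis
    using ln_cauchy_likelihood[OF \<open>s > 0\<close>] ln_cauchy_likelihood[OF \<open>Im \<theta> > 0\<close>, of n x "Re \<theta>"] by simp
qed

lemma cauchy_log_likelihood_deriv_location:
  assumes "s > 0"
  shows "((\<lambda>m'. cauchy_log_likelihood n x m' s) has_real_derivative
           2 * (\<Sum>j=1..n. (x j - m) / ((x j - m)\<^sup>2 + s\<^sup>2))) (at m)"
proof -
  have denom_pos: "(x j - m)\<^sup>2 + s\<^sup>2 > 0" for j
    using assms by (simp add: add_nonneg_pos)
  have "((\<lambda>m'. cauchy_log_likelihood n x m' s) has_real_derivative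
      (\<Sum>j=1..n. 2 * ((x j - m) / ((x j - m)\<^sup>2 + s\<^sup>2)))) (at m)"
    unfolding cauchy_log_likelihood_def
  proof (rule DERIV_sum)
    show "((\<lambda>m'. ln s - ln pi - ln ((x j - m')\<^sup>2 + s\<^sup>2)) has_real_derivative
        2 * ((x j - m) / ((x j - m)\<^sup>2 + s\<^sup>2))) (at m)" for j
      using denom_pos[of j] by (auto intro!: derivative_eq_intros simp: field_simps minus_divide_left)
  qed
  then show ?thesis by (simp only: sum_distrib_left)
qed

lemma cauchy_log_likelihood_deriv_scale:
  assumes "s > 0"
  shows "((\<lambda>s'. cauchy_log_likelihood n x m s') has_real_derivative
           - (\<Sum>j=1..n. (s\<^sup>2 - (x j - m)\<^sup>2) / ((x j - m)\<^sup>2 + s\<^sup>2)) / s) (at s)"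
proof -
  have "((\<lambda>s'. cauchy_log_likelihood n x m s') has_real_derivative
      (\<Sum>j=1..n. - ((s\<^sup>2 - (x j - m)\<^sup>2) / ((x j - m)\<^sup>2 + s\<^sup>2) / s))) (at s)"
    unfolding cauchy_log_likelihood_def
  proof (rule DERIV_sum)
    show "((\<lambda>s'. ln s' - ln pi - ln ((x j - m)\<^sup>2 + s'\<^sup>2)) has_real_derivative
        - ((s\<^sup>2 - (x j - m)\<^sup>2) / ((x j - m)\<^sup>2 + s\<^sup>2) / s)) (at s)" for j
      using assms by (auto intro!: derivative_eq_intros
          simp: divide_simps power2_eq_square add_nonneg_pos)
  qed
  then show ?thesis by (simp only: minus_divide_left[symmetric] sum_divide_distrib sum_negf)
qed

lemma cauchy_mle_score_equations:
  assumes mle: "is_cauchy_mle n x \<theta>"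
  defines "m \<equiv> Re \<theta>" and "s \<equiv> Im \<theta>"
  shows "(\<Sum>j=1..n. (x j - m) / ((x j - m)\<^sup>2 + s\<^sup>2)) = 0"
    and "(\<Sum>j=1..n. (s\<^sup>2 - (x j - m)\<^sup>2) / ((x j - m)\<^sup>2 + s\<^sup>2)) = 0"
proof -
  have "s > 0" using cauchy_mle_Im_pos[OF mle] by (simp add: s_def)
  have "\<forall>m'. \<bar>m - m'\<bar> < 1 \<longrightarrow> cauchy_log_likelihood n x m' s \<le> cauchy_log_likelihood n x m s"
    using cauchy_log_likelihood_le_mle[OF mle \<open>s > 0\<close>] by (simp add: m_def s_def)
  from DERIV_local_max[OF cauchy_log_likelihood_deriv_location[OF \<open>s > 0\<close>] zero_less_one this]
  show "(\<Sum>j=1..n. (x j - m) / ((x j - m)\<^sup>2 + s\<^sup>2)) = 0"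
    by simp
  have "\<forall>s'. \<bar>s - s'\<bar> < s \<longrightarrow> cauchy_log_likelihood n x m s' \<le> cauchy_log_likelihood n x m s"
    using cauchy_log_likelihood_le_mle[OF mle] by (simp add: m_def s_def)
  from DERIV_local_max[OF cauchy_log_likelihood_deriv_scale[OF \<open>s > 0\<close>] \<open>s > 0\<close> this]
  show "(\<Sum>j=1..n. (s\<^sup>2 - (x j - m)\<^sup>2) / ((x j - m)\<^sup>2 + s\<^sup>2)) = 0"
    using \<open>s > 0\<close> by simp
qed

lemma cos_double_arctan: "cos (2 * arctan a) = (1 - a\<^sup>2) / (1 + a\<^sup>2)"
proof -
  have "sqrt (1 + a\<^sup>2) ^ 2 = 1 + a\<^sup>2" by (simp add: add_nonneg_nonneg)
  then show ?thesis
    by (simp add: cos_double cos_arctan sin_arctan power_divide diff_divide_distrib)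
qed

lemma sin_double_arctan: "sin (2 * arctan a) = 2 * a / (1 + a\<^sup>2)"
proof -
  have "sqrt (1 + a\<^sup>2) * sqrt (1 + a\<^sup>2) = 1 + a\<^sup>2" by (simp add: add_nonneg_nonneg)
  then show ?thesis by (simp add: sin_double cos_arctan sin_arctan)
qed

lemma cauchy_mle_sum_cis_angle:
  assumes mle: "is_cauchy_mle n x \<theta>"
  shows "(\<Sum>j=1..n. cis (cauchy_angle (x j) \<theta>)) = 0"
proof -
  define m s where "m = Re \<theta>" and "s = Im \<theta>"
  have "s > 0" using cauchy_mle_Im_pos[OF mle] by (simp add: s_def)
  have cos: "cos (cauchy_angle y \<theta>) = (s\<^sup>2 - (y - m)\<^sup>2) / ((y - m)\<^sup>2 + s\<^sup>2)" for y
    using \<open>s > 0\<close> unfolding cauchy_angle_def cos_double_arctan m_def [symmetric] s_def [symmetric]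
    by (simp add: power_divide add_nonneg_pos divide_simps)
  have sin: "sin (cauchy_angle y \<theta>) = 2 * s * ((y - m) / ((y - m)\<^sup>2 + s\<^sup>2))" for y
    using \<open>s > 0\<close> unfolding cauchy_angle_def sin_double_arctan m_def [symmetric] s_def [symmetric]
    by (simp add: power_divide add_nonneg_pos divide_simps power2_eq_square) (simp add: algebra_simps)
  show ?thesis
  proof (rule complex_eqI)
    have "Re (\<Sum>j=1..n. cis (cauchy_angle (x j) \<theta>)) =
        (\<Sum>j=1..n. (s\<^sup>2 - (x j - m)\<^sup>2) / ((x j - m)\<^sup>2 + s\<^sup>2))"
      by (simp only: Re_sum cis.sel cos)
    then show "Re (\<Sum>j=1..n. cis (cauchy_angle (x j) \<theta>)) = Re 0"
      using cauchy_mle_score_equations(2)[OF mle] by (simp add: m_def s_def)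
    have "Im (\<Sum>j=1..n. cis (cauchy_angle (x j) \<theta>)) =
        2 * s * (\<Sum>j=1..n. (x j - m) / ((x j - m)\<^sup>2 + s\<^sup>2))"
      by (simp only: Im_sum cis.sel sin sum_distrib_left)
    then show "Im (\<Sum>j=1..n. cis (cauchy_angle (x j) \<theta>)) = Im 0"
      using cauchy_mle_score_equations(1)[OF mle] by (simp add: m_def s_def)
  qed
qed

lemma norm_cis_add_cis_squared: "(cmod (cis p + cis q))\<^sup>2 = 2 + 2 * cos (q - p)"
proof -
  have "(cmod (cis p + cis q))\<^sup>2 = (cos p + cos q)\<^sup>2 + (sin p + sin q)\<^sup>2"
    by (simp add: cmod_power2)
  also have "\<dots> = 2 + 2 * cos (q - p)"
    unfolding cos_diff using sin_cos_squared_add[of p] sin_cos_squared_add[of q] by algebra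
  finally show ?thesis .
qed

lemma cos_eq_cos_0_2pi_cases:
  assumes "0 < a" "a < 2*pi" "0 < b" "b < 2*pi" "cos a = cos b"
  shows "a = b \<or> a + b = 2*pi"
proof -
  have reflect: "cos (2*pi - u) = cos u" for u by (simp add: cos_diff)
  consider "a \<le> pi" "b \<le> pi" | "a \<le> pi" "b > pi" | "a > pi" "b \<le> pi" | "a > pi" "b > pi"
    by linarith
  then show ?thesis
  proof cases
    case 1 then show ?thesis using cos_inj_pi[of a b] assms by auto
  next
    case 2 then show ?thesis using cos_inj_pi[of a "2*pi - b"] assms reflect[of b] by auto
  next
    case 3 then show ?thesis using cos_inj_pi[of "2*pi - a" b] assms reflect[of a] by auto
  next
    case 4 then show ?thesis
      using cos_inj_pi[of "2*pi - a" "2*pi - b"] assms reflect[of a] reflect[of b] by auto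
  qed
qed

lemma cis_sum_zero_3_equally_spaced:
  assumes "p1 < p2" "p2 < p3" "p3 < p1 + 2*pi" and sum: "cis p1 + cis p2 + cis p3 = 0"
  shows "p2 - p1 = 2*pi/3" "p3 - p2 = 2*pi/3"
proof -
  have gap: "cos (q - p) = cos (2*pi/3)" if "cis p + cis q = - cis r" for p q r
    using norm_cis_add_cis_squared[of p q] that by (simp add: cos_120)
  have "cos (p2 - p1) = cos (2*pi/3)" "cos (p3 - p2) = cos (2*pi/3)"
      "cos (p3 - p1) = cos (2*pi/3)"
    using gap[of p1 p2 p3] gap[of p2 p3 p1] gap[of p1 p3 p2] sum
    by (simp_all add: eq_neg_iff_add_eq_0 algebra_simps)
  then have "p2 - p1 = 2*pi/3 \<or> p2 - p1 + 2*pi/3 = 2*pi"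
      "p3 - p2 = 2*pi/3 \<or> p3 - p2 + 2*pi/3 = 2*pi"
      "p3 - p1 = 2*pi/3 \<or> p3 - p1 + 2*pi/3 = 2*pi"
    by (intro cos_eq_cos_0_2pi_cases; use assms(1-3) pi_gt_zero in linarith)+
  then show "p2 - p1 = 2*pi/3" "p3 - p2 = 2*pi/3"
    using assms(1-3) by linarith+
qed

lemma cis_sum_zero_4_antipodal:
  assumes "p1 < p2" "p2 < p3" "p3 < p4" "p4 < p1 + 2*pi"
    and sum: "cis p1 + cis p2 + cis p3 + cis p4 = 0"
  shows "p3 - p1 = pi" "p4 - p2 = pi"
proof -
  have gaps: "cos (q - p) = cos (t - r)" if "cis p + cis q = - (cis r + cis t)" for p q r t
  proof -
    have "cmod (cis p + cis q) = cmod (cis r + cis t)" by (simp only: that norm_minus_cancel)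
    then show ?thesis using norm_cis_add_cis_squared[of p q] norm_cis_add_cis_squared[of r t] by simp
  qed
  have "cos (p2 - p1) = cos (p4 - p3)" "cos (p4 - p1) = cos (p3 - p2)"
    using gaps[of p1 p2 p3 p4] gaps[of p1 p4 p2 p3] sum
    by (simp_all add: eq_neg_iff_add_eq_0 algebra_simps)
  then have "p2 - p1 = p4 - p3 \<or> p2 - p1 + (p4 - p3) = 2*pi"
      "p4 - p1 = p3 - p2 \<or> p4 - p1 + (p3 - p2) = 2*pi"
    by (intro cos_eq_cos_0_2pi_cases; use assms(1-4) in linarith)+
  then show "p3 - p1 = pi" "p4 - p2 = pi"
    using assms(1-4) by linarith+
qed

lemma cauchy_mle_cdf_gaps_3:
  assumes "x 1 < x 2" "x 2 < x 3" and mle: "is_cauchy_mle 3 x \<theta>"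
  shows "cauchy_cdf (x 2) \<theta> - cauchy_cdf (x 1) \<theta> = 1/3"
    and "cauchy_cdf (x 3) \<theta> - cauchy_cdf (x 2) \<theta> = 1/3"
proof -
  have "Im \<theta> > 0" using mle by (rule cauchy_mle_Im_pos)
  let ?\<phi> = "\<lambda>j. cauchy_angle (x j) \<theta>"
  have "?\<phi> 1 < ?\<phi> 2" "?\<phi> 2 < ?\<phi> 3"
    using assms(1,2) cauchy_angle_strict_mono[OF \<open>Im \<theta> > 0\<close>] by blast+
  moreover have "?\<phi> 3 < ?\<phi> 1 + 2*pi"
    using cauchy_angle_bounds[of "x 1" \<theta>] cauchy_angle_bounds[of "x 3" \<theta>] by linarith
  moreover have "cis (?\<phi> 1) + cis (?\<phi> 2) + cis (?\<phi> 3) = 0"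
    using cauchy_mle_sum_cis_angle[OF mle] by (simp add: eval_nat_numeral)
  ultimately have "?\<phi> 2 - ?\<phi> 1 = 2*pi/3" "?\<phi> 3 - ?\<phi> 2 = 2*pi/3"
    by (rule cis_sum_zero_3_equally_spaced)+
  then show "cauchy_cdf (x 2) \<theta> - cauchy_cdf (x 1) \<theta> = 1/3"
    and "cauchy_cdf (x 3) \<theta> - cauchy_cdf (x 2) \<theta> = 1/3"
    by (simp_all only: cauchy_cdf_diff[OF \<open>Im \<theta> > 0\<close>]) simp_all
qed

lemma cauchy_mle_cdf_gaps_4:
  assumes "x 1 < x 2" "x 2 < x 3" "x 3 < x 4" and mle: "is_cauchy_mle 4 x \<theta>"
  shows "cauchy_cdf (x 3) \<theta> - cauchy_cdf (x 1) \<theta> = 1/2"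
    and "cauchy_cdf (x 4) \<theta> - cauchy_cdf (x 2) \<theta> = 1/2"
proof -
  have "Im \<theta> > 0" using mle by (rule cauchy_mle_Im_pos)
  let ?\<phi> = "\<lambda>j. cauchy_angle (x j) \<theta>"
  have "?\<phi> 1 < ?\<phi> 2" "?\<phi> 2 < ?\<phi> 3" "?\<phi> 3 < ?\<phi> 4"
    using assms(1-3) cauchy_angle_strict_mono[OF \<open>Im \<theta> > 0\<close>] by blast+
  moreover have "?\<phi> 4 < ?\<phi> 1 + 2*pi"
    using cauchy_angle_bounds[of "x 1" \<theta>] cauchy_angle_bounds[of "x 4" \<theta>] by linarith
  moreover have "cis (?\<phi> 1) + cis (?\<phi> 2) + cis (?\<phi> 3) + cis (?\<phi> 4) = 0"
    using cauchy_mle_sum_cis_angle[OF mle] by (simp add: eval_nat_numeral)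
  ultimately have "?\<phi> 3 - ?\<phi> 1 = pi" "?\<phi> 4 - ?\<phi> 2 = pi"
    by (rule cis_sum_zero_4_antipodal)+
  then show "cauchy_cdf (x 3) \<theta> - cauchy_cdf (x 1) \<theta> = 1/2"
    and "cauchy_cdf (x 4) \<theta> - cauchy_cdf (x 2) \<theta> = 1/2"
    by (simp_all only: cauchy_cdf_diff[OF \<open>Im \<theta> > 0\<close>]) simp_all
qed

theorem mainTheorem12:
  fixes n :: nat and x :: "nat \<Rightarrow> real" and \<theta> :: complex
  assumes sorted: "\<And>i j. 1 \<le> i \<Longrightarrow> i < j \<Longrightarrow> j \<le> n \<Longrightarrow> x i < x j"
    and mle: "is_cauchy_mle n x \<theta>"
  shows "(n = 3 \<longrightarrow> cauchy_cdf (x 3) \<theta> + cauchy_cdf (x 1) \<theta> = 2 * cauchy_cdf (x 2) \<theta>) \<and>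
         (n = 4 \<longrightarrow> cauchy_cdf (x 3) \<theta> - cauchy_cdf (x 1) \<theta> = 1/2 \<and>
                   cauchy_cdf (x 4) \<theta> - cauchy_cdf (x 2) \<theta> = 1/2)"
proof (intro conjI impI)
  assume "n = 3"
  with sorted mle have "x 1 < x 2" "x 2 < x 3" "is_cauchy_mle 3 x \<theta>" by simp_all
  from cauchy_mle_cdf_gaps_3[OF this]
  show "cauchy_cdf (x 3) \<theta> + cauchy_cdf (x 1) \<theta> = 2 * cauchy_cdf (x 2) \<theta>" by linarith
next
  assume "n = 4"
  with sorted mle have "x 1 < x 2" "x 2 < x 3" "x 3 < x 4" "is_cauchy_mle 4 x \<theta>" by simp_all
  from cauchy_mle_cdf_gaps_4[OF this]
  show "cauchy_cdf (x 3) \<theta> - cauchy_cdf (x 1) \<theta> = 1/2"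
    and "cauchy_cdf (x 4) \<theta> - cauchy_cdf (x 2) \<theta> = 1/2" by simp_all
qed

end
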